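(* Under the hypotheses and with the construction of the context (in particular $\lambda>0$ not a fusion value and $\|\boldsymbol\delta'_{ij}\|\le\lambda_1<\lambda$), the constructed primal–dual pair is strictly complementary: $$t_{ij}+\lambda>\|\mathbf y_{ij}+\boldsymbol\delta_{ij}\|\ \ (1\le i<j\le n),\qquad s_i+1-\gamma_i>\left\|\begin{pmatrix}\mathbf z_i+\boldsymbol\beta_i\\ u_i+\gamma_i\end{pmatrix}\right\|\ \ (1\le i\le n).$$
   Context: Data: $n\ge2$, $d\ge1$, $\mathbf a_i\in\mathbb R^d$, $r_i>0$. For $\lambda\ge0$, (P$_\lambda$): minimize $\frac12\sum_ir_i\|\mathbf x_i-\mathbf a_i\|^2+\lambda\sum_{i<j}r_ir_j\|\mathbf x_i-\mathbf x_j\|$; unique minimizer $\mathbf x^*(\lambda)$, whose clusters are the classes of $i\sim j\iff\mathbf x_i^*(\lambda)=\mathbf x_j^*(\lambda)$. $\lambda_0>0$ is a fusion value if some $i\ne j$ have $\mathbf x_i^*(\lambda_0)=\mathbf x_j^*(\lambda_0)$ but $\mathbf x_i^*(\lambda)\ne\mathbf x_j^*(\lambda)$ for all $\lambda<\lambda_0$. Fix $\lambda>0$ not a fusion value; $\lambda_1$ is the largest fusion value below $\lambda$ (or $0$); $C_1,\dots,C_K$ are the clusters of $\mathbf x^*(\lambda_1)$. $r'_k:=\sum_{i\in C_k}r_i$, $\bar{\mathbf a}_k:=\frac1{r'_k}\sum_{i\in C_k}r_i\mathbf a_i$; $(\hat{\mathbf x}_1,\dots,\hat{\mathbf x}_K)$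 is the minimizer of $\frac12\sum_kr'_k\|\mathbf x_k-\bar{\mathbf a}_k\|^2+\lambda\sum_{k<k'}r'_kr'_{k'}\|\mathbf x_k-\mathbf x_{k'}\|$. Antisymmetric notation $\mathbf v_{\langle ij\rangle}=\mathbf v_{ij}$ ($i<j$), $-\mathbf v_{ji}$ ($i>j$), $\mathbf 0$ ($i=j$). Given vectors $\boldsymbol\delta'_{ij}$ for $i<j$ in a common cluster with $\|\boldsymbol\delta'_{ij}\|\le\lambda_1$ and $\mathbf a_i-\bar{\mathbf a}_k=-\sum_{j\in C_k}r_j\boldsymbol\delta'_{\langle ij\rangle}$ for $i\in C_k$, the construction is: $\mathbf x^*_i:=\hat{\mathbf x}_k$ ($i\in C_k$), $\mathbf y_{ij}:=\mathbf x_i^*-\mathbf x_j^*$, $\mathbf z_i:=\mathbf x_i^*-\mathbf a_i$, $s_i:=\frac12(1+\|\mathbf z_i\|^2)$, $u_i:=\frac12(-1+\|\mathbf z_i\|^2)$, $t_{ij}:=\|\mathbf y_{ij}\|$, $\boldsymbol\delta_{ij}:=\boldsymbol\delta'_{ij}$ for same-cluster pairs and $\lambda(\mathbf x_j^*-\mathbf x_i^* )/\|\mathbf x_j^*-\mathbf x_i^*\|$ otherwise, $\boldsymbol\beta_i:=-\mathbf z_i$, $\gamma_i:=\frac12(1-\|\boldsymbol\beta_i\|^2)$. *)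

theory Defs
  imports "HOL-Analysis.Analysis"
begin

definition Pobj :: "nat \<Rightarrow> (nat \<Rightarrow> real) \<Rightarrow> (nat \<Rightarrow> 'd::euclidean_space) \<Rightarrow> real
                     \<Rightarrow> (nat \<Rightarrow> 'd) \<Rightarrow> real" where
  "Pobj n r a lam x =
     (1/2) * (\<Sum>i<n. r i * (norm (x i - a i))\<^sup>2)
     + lam * (\<Sum>i<n. \<Sum>j\<in>{i<..<n}. r i * r j * norm (x i - x j))"

definition is_minimizer :: "nat \<Rightarrow> (nat \<Rightarrow> real) \<Rightarrow> (nat \<Rightarrow> 'd::euclidean_space) \<Rightarrow> real
                     \<Rightarrow> (nat \<Rightarrow> 'd) \<Rightarrow> bool" where
  "is_minimizer n r a lam x \<longleftrightarrow> (\<forall>y. Pobj n r a lam x \<le> Pobj n r a lam y)"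

text \<open>Fusion value, w.r.t. the solution path xs (xs mu = x*(mu) for mu \<ge> 0).\<close>
definition is_fusion :: "nat \<Rightarrow> (real \<Rightarrow> nat \<Rightarrow> 'd) \<Rightarrow> real \<Rightarrow> bool" where
  "is_fusion n xs lam0 \<longleftrightarrow> lam0 > 0 \<and>
     (\<exists>i<n. \<exists>j<n. i \<noteq> j \<and> xs lam0 i = xs lam0 j \<and>
        (\<forall>mu. 0 \<le> mu \<and> mu < lam0 \<longrightarrow> xs mu i \<noteq> xs mu j))"

definition anti :: "(nat \<Rightarrow> nat \<Rightarrow> 'a::ab_group_add) \<Rightarrow> nat \<Rightarrow> nat \<Rightarrow> 'a" where
  "anti v i j = (if i < j then v i j else if j < i then - v j i else 0)"

end

theory Submission
  imports Defs
begin

text \<open>Inside a cluster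
  \<open>y\<^sub>i\<^sub>j = 0\<close>, so the first one reduces to \<open>\<parallel>\<delta>'\<^sub>i\<^sub>j\<parallel> \<le> \<lambda>\<^sub>1 < \<lambda>\<close>; across clusters
  \<open>y\<^sub>i\<^sub>j + \<delta>\<^sub>i\<^sub>j\<close> is a multiple of \<open>y\<^sub>i\<^sub>j\<close> of length \<open>|\<lambda> - t\<^sub>i\<^sub>j|\<close>. In the cone
  constraints \<open>\<beta>\<^sub>i = -z\<^sub>i\<close> and \<open>\<gamma>\<^sub>i = -u\<^sub>i\<close>, so the right-hand side vanishes while the
  left-hand side is \<open>1 + \<parallel>z\<^sub>i\<parallel>\<^sup>2\<close>.\<close>

lemma norm_minus_plus_rescaled_lt:
  fixes d :: "'a::real_normed_vector"
  assumes "lam > 0"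
  shows "norm (- d + (lam / norm d) *\<^sub>R d) < norm d + lam"
proof (cases "d = 0")
  case True
  then show ?thesis using assms by simp
next
  case False
  then have "norm d > 0" by simp
  have "- d + (lam / norm d) *\<^sub>R d = (lam / norm d - 1) *\<^sub>R d"
    by (simp add: algebra_simps)
  also have "norm \<dots> = \<bar>lam - norm d\<bar>"
    using \<open>norm d > 0\<close> by (simp add: abs_mult[symmetric] field_simps)
  finally show ?thesis using \<open>norm d > 0\<close> assms by linarith
qed

lemma norm_minus_self_pair_lt:
  fixes z :: "'a::real_normed_vector"
  shows "let s = (1 + (norm z)\<^sup>2) / 2; u = (-1 + (norm z)\<^sup>2) / 2;
             beta = - z; gamma = (1 - (norm beta)\<^sup>2) / 2
         in s + 1 - gamma > norm (z + beta, u + gamma)"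
proof -
  have "(z + - z, (-1 + (norm z)\<^sup>2) / 2 + (1 - (norm z)\<^sup>2) / 2) = 0"
    by (simp add: zero_prod_def field_simps)
  moreover have "(1 + (norm z)\<^sup>2) / 2 + 1 - (1 - (norm z)\<^sup>2) / 2 > 0"
    by (simp add: field_simps add_pos_nonneg)
  ultimately show ?thesis unfolding Let_def norm_minus_cancel by (metis norm_zero)
qed

theorem lemma6p5:
  fixes n K :: nat and a :: "nat \<Rightarrow> 'd::euclidean_space" and r :: "nat \<Rightarrow> real"
    and xs :: "real \<Rightarrow> nat \<Rightarrow> 'd" and lam lam1 :: real
    and C :: "nat \<Rightarrow> nat set" and xhat :: "nat \<Rightarrow> 'd"
    and delta' delta :: "nat \<Rightarrow> nat \<Rightarrow> 'd" and xst :: "nat \<Rightarrow> 'd"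
  assumes n2: "n \<ge> 2"
    and rpos: "\<forall>i<n. r i > 0"
    and xs_min: "\<forall>mu\<ge>0. is_minimizer n r a mu (xs mu)"
    and lam_pos: "lam > 0"
    and lam_nf: "\<not> is_fusion n xs lam"
    and lam1_nonneg: "lam1 \<ge> 0" and lam1_lt: "lam1 < lam"
    and lam1_fus: "lam1 > 0 \<longrightarrow> is_fusion n xs lam1"
    and lam1_max: "\<forall>mu. is_fusion n xs mu \<and> mu < lam \<longrightarrow> mu \<le> lam1"
    and C_clusters: "bij_betw C {..<K} {{j. j < n \<and> xs lam1 j = xs lam1 i} | i. i < n}"
    and xhat_min: "is_minimizer K (\<lambda>k. \<Sum>i\<in>C k. r i)
                     (\<lambda>k. (1 / (\<Sum>i\<in>C k. r i)) *\<^sub>R (\<Sum>i\<in>C k. r i *\<^sub>R a i)) lam xhat"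
    and delta'_bd: "\<forall>k<K. \<forall>i\<in>C k. \<forall>j\<in>C k. i < j \<longrightarrow> norm (delta' i j) \<le> lam1"
    and delta'_eq: "\<forall>k<K. \<forall>i\<in>C k.
          a i - (1 / (\<Sum>l\<in>C k. r l)) *\<^sub>R (\<Sum>l\<in>C k. r l *\<^sub>R a l)
          = - (\<Sum>j\<in>C k. r j *\<^sub>R anti delta' i j)"
    and xst_def: "\<forall>k<K. \<forall>i\<in>C k. xst i = xhat k"
    and delta_def: "\<forall>i j. i < j \<and> j < n \<longrightarrow>
          ((\<exists>k<K. i \<in> C k \<and> j \<in> C k) \<longrightarrow> delta i j = delta' i j) \<and>
          (\<not> (\<exists>k<K. i \<in> C k \<and> j \<in> C k) \<longrightarrow>
             delta i j = (lam / norm (xst j - xst i)) *\<^sub>R (xst j - xst i))"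
  shows "(\<forall>i j. i < j \<and> j < n \<longrightarrow>
            norm (xst i - xst j) + lam > norm ((xst i - xst j) + delta i j))
       \<and> (\<forall>i<n. let z = xst i - a i;
                   s = (1 + (norm z)\<^sup>2) / 2;
                   u = (-1 + (norm z)\<^sup>2) / 2;
                   beta = - z;
                   gamma = (1 - (norm beta)\<^sup>2) / 2
               in s + 1 - gamma > norm (z + beta, u + gamma))"
proof (intro conjI allI impI)
  fix i j assume ij: "i < j \<and> j < n"
  show "norm (xst i - xst j) + lam > norm ((xst i - xst j) + delta i j)"
  proof (cases "\<exists>k<K. i \<in> C k \<and> j \<in> C k")
    case True
    then obtain k where k: "k < K" "i \<in> C k" "j \<in> C k" by blast
    then have "xst i = xst j" and "norm (delta' i j) \<le> lam1"
      using xst_def delta'_bd ij by auto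
    then show ?thesis using delta_def ij True lam1_lt by simp
  next
    case False
    then have "delta i j = (lam / norm (xst j - xst i)) *\<^sub>R (xst j - xst i)"
      using delta_def ij by blast
    then show ?thesis
      using norm_minus_plus_rescaled_lt[OF lam_pos, of "xst j - xst i"]
      by (simp add: norm_minus_commute)
  qed
next
  fix i
  show "let z = xst i - a i; s = (1 + (norm z)\<^sup>2) / 2; u = (-1 + (norm z)\<^sup>2) / 2;
            beta = - z; gamma = (1 - (norm beta)\<^sup>2) / 2
        in s + 1 - gamma > norm (z + beta, u + gamma)"
    using norm_minus_self_pair_lt[of "xst i - a i"] unfolding Let_def .
qed

end
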